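(* Let $G$ be a labeled complete bipartite graph with partite sets $V_1,V_2$, let $0<\gamma<\alpha<1/2$, and let $x$ be a fractional clustering of $G$. Run the following algorithm: set $S=V(G)$; while $V_1\cap S\ne\emptyset$, for each $u\in V_1\cap S$ let $T_u=\{w\in S\setminus\{u\}:x_{uw}\le\alpha\}$ and $T^*_u=\{w\in V_2\cap S:x_{uw}\le\gamma\}$, choose a pivot $u\in V_1\cap S$ maximizing $|T^*_u|$, let $T=T_u$, and if $\sum_{w\in V_2\cap T}x_{uw}\ge\alpha|V_2\cap T|/2$ output $\{u\}$ and remove $u$ from $S$, otherwise output $C=\{u\}\cup T$ and remove $C$ from $S$. Consider any iteration in which $C=\{u\}\cup T$ is output (i.e. $\sum_{w\in V_2\cap T}x_{uw}<\alpha|V_2\cap T|/2$), and let $S$ denote the set of remaining vertices at the start of that iteration. Then for every $z\in (V_1\cap S)\setminus C$, \[ \bigl|N^+(z)\cap C\bigr| \le \max\left\{\tfrac{1}{1-2\alpha},\tfrac{2}{\alpha}\right\}\left(\sum_{w\in N^+(z)\cap C}x_{zw}+\sum_{w\in N^-(z)\cap C}(1-x_{zw})\right). \]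
   Context: A fractional clustering of $G$ is a vector $x$ indexed by all unordered pairs of distinct vertices of $G$ with $x_{uv}\in[0,1]$ and $x_{vz}\le x_{vw}+x_{wz}$ for all distinct $v,w,z$; $x_{uu}=0$. $N^+(z)$, $N^-(z)$ are the sets of vertices joined to $z$ by a $+$ edge, resp. $-$ edge (for $z\in V_1$ these lie in $V_2$). (In the paper's terminology: the left side is the total cluster-cost and the sum on the right the total LP-cost of the edges from $z$ to the cluster $C$.) *)

theory Defs
  imports Complex_Main
begin

text \<open>A labeled complete bipartite graph with partite sets V1, V2: every pair
  {v,w} with v in V1, w in V2 is an edge, labelled + (lab v w = True) or - (False).
  The labelling is symmetric.\<close>
definition labeled_cbg :: "'a set \<Rightarrow> 'a set \<Rightarrow> ('a \<Rightarrow> 'a \<Rightarrow> bool) \<Rightarrow> bool" where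
  "labeled_cbg V1 V2 lab \<longleftrightarrow> finite V1 \<and> finite V2 \<and> V1 \<inter> V2 = {} \<and>
     (\<forall>v\<in>V1. \<forall>w\<in>V2. lab v w = lab w v)"

definition is_edge :: "'a set \<Rightarrow> 'a set \<Rightarrow> 'a \<Rightarrow> 'a \<Rightarrow> bool" where
  "is_edge V1 V2 z w \<longleftrightarrow> (z \<in> V1 \<and> w \<in> V2) \<or> (z \<in> V2 \<and> w \<in> V1)"

definition Nplus :: "'a set \<Rightarrow> 'a set \<Rightarrow> ('a \<Rightarrow> 'a \<Rightarrow> bool) \<Rightarrow> 'a \<Rightarrow> 'a set" where
  "Nplus V1 V2 lab z = {w. is_edge V1 V2 z w \<and> lab z w}"

definition Nminus :: "'a set \<Rightarrow> 'a set \<Rightarrow> ('a \<Rightarrow> 'a \<Rightarrow> bool) \<Rightarrow> 'a \<Rightarrow> 'a set" where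
  "Nminus V1 V2 lab z = {w. is_edge V1 V2 z w \<and> \<not> lab z w}"

text \<open>Fractional clustering on vertex set V: a symmetric function on pairs
  (representing the vector indexed by unordered pairs) with values in [0,1],
  zero diagonal, and the triangle inequality for distinct vertices.\<close>
definition frac_clustering :: "'a set \<Rightarrow> ('a \<Rightarrow> 'a \<Rightarrow> real) \<Rightarrow> bool" where
  "frac_clustering V x \<longleftrightarrow>
     (\<forall>u\<in>V. x u u = 0) \<and>
     (\<forall>u\<in>V. \<forall>v\<in>V. u \<noteq> v \<longrightarrow> x u v = x v u \<and> 0 \<le> x u v \<and> x u v \<le> 1) \<and>
     (\<forall>v\<in>V. \<forall>w\<in>V. \<forall>z\<in>V. v \<noteq> w \<and> w \<noteq> z \<and> v \<noteq> z \<longrightarrow> x v z \<le> x v w + x w z)"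

definition Tset :: "('a \<Rightarrow> 'a \<Rightarrow> real) \<Rightarrow> real \<Rightarrow> 'a set \<Rightarrow> 'a \<Rightarrow> 'a set" where
  "Tset x \<alpha> S u = {w \<in> S - {u}. x u w \<le> \<alpha>}"

definition Tstar :: "'a set \<Rightarrow> ('a \<Rightarrow> 'a \<Rightarrow> real) \<Rightarrow> real \<Rightarrow> 'a set \<Rightarrow> 'a \<Rightarrow> 'a set" where
  "Tstar V2 x \<gamma> S u = {w \<in> V2 \<inter> S. x u w \<le> \<gamma>}"

definition is_pivot :: "'a set \<Rightarrow> 'a set \<Rightarrow> ('a \<Rightarrow> 'a \<Rightarrow> real) \<Rightarrow> real \<Rightarrow> 'a set \<Rightarrow> 'a \<Rightarrow> bool" where
  "is_pivot V1 V2 x \<gamma> S u \<longleftrightarrow> u \<in> V1 \<inter> S \<and>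
     (\<forall>u'\<in>V1 \<inter> S. card (Tstar V2 x \<gamma> S u') \<le> card (Tstar V2 x \<gamma> S u))"

definition singleton_case :: "'a set \<Rightarrow> ('a \<Rightarrow> 'a \<Rightarrow> real) \<Rightarrow> real \<Rightarrow> 'a set \<Rightarrow> 'a \<Rightarrow> bool" where
  "singleton_case V2 x \<alpha> S u \<longleftrightarrow>
     (\<Sum>w\<in>V2 \<inter> Tset x \<alpha> S u. x u w) \<ge> \<alpha> * real (card (V2 \<inter> Tset x \<alpha> S u)) / 2"

text \<open>Sets S of remaining vertices that can occur at the start of an iteration
  of the (nondeterministic, because of ties in the pivot choice) algorithm.\<close>
inductive alg_reach :: "'a set \<Rightarrow> 'a set \<Rightarrow> ('a \<Rightarrow> 'a \<Rightarrow> real) \<Rightarrow> real \<Rightarrow> real \<Rightarrow> 'a set \<Rightarrow> bool"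
  for V1 V2 x \<alpha> \<gamma> where
  start: "alg_reach V1 V2 x \<alpha> \<gamma> (V1 \<union> V2)"
| single: "\<lbrakk>alg_reach V1 V2 x \<alpha> \<gamma> S; V1 \<inter> S \<noteq> {}; is_pivot V1 V2 x \<gamma> S u;
            singleton_case V2 x \<alpha> S u\<rbrakk>
           \<Longrightarrow> alg_reach V1 V2 x \<alpha> \<gamma> (S - {u})"
| cluster: "\<lbrakk>alg_reach V1 V2 x \<alpha> \<gamma> S; V1 \<inter> S \<noteq> {}; is_pivot V1 V2 x \<gamma> S u;
            \<not> singleton_case V2 x \<alpha> S u\<rbrakk>
           \<Longrightarrow> alg_reach V1 V2 x \<alpha> \<gamma> (S - ({u} \<union> Tset x \<alpha> S u))"

end

theory Submission
  imports Defs
begin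

text \<open>Only the edges from \<open>z\<close> into \<open>V\<^sub>2 \<inter> T\<close> are relevant, since \<open>z\<close> and \<open>u\<close> both lie in
  \<open>V\<^sub>1\<close>. Put \<open>d = x\<^sub>u\<^sub>z > \<alpha>\<close>. By the triangle inequality each \<open>w \<in> V\<^sub>2 \<inter> T\<close> has
  \<open>|x\<^sub>z\<^sub>w - d| \<le> x\<^sub>u\<^sub>w \<le> \<alpha>\<close>. If \<open>d \<le> 1 - \<alpha>/2\<close>, summing these bounds and using that the
  cluster test failed, \<open>\<Sum> x\<^sub>u\<^sub>w < \<alpha>|V\<^sub>2 \<inter> T|/2\<close>, gives an LP-cost of at least
  \<open>(d - \<alpha>/2)|N\<^sup>+(z) \<inter> C| \<ge> (\<alpha>/2)|N\<^sup>+(z) \<inter> C|\<close>. Otherwise every \<open>+\<close> edge alone costs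
  \<open>x\<^sub>z\<^sub>w \<ge> d - \<alpha> > 1 - 3\<alpha>/2 \<ge> \<alpha>/2\<close>. Either way the factor \<open>2/\<alpha>\<close> suffices.\<close>

lemma alg_reach_subset: "alg_reach V1 V2 x \<alpha> \<gamma> S \<Longrightarrow> S \<subseteq> V1 \<union> V2"
  by (induction rule: alg_reach.induct) auto

lemma frac_clustering_range:
  assumes "frac_clustering V x" "u \<in> V" "v \<in> V"
  shows "0 \<le> x u v" "x u v \<le> 1"
  using assms unfolding frac_clustering_def by (cases "u = v"; force)+

lemma frac_clustering_dist_diff:
  assumes x: "frac_clustering V x" and V: "u \<in> V" "w \<in> V" "z \<in> V"
    and distinct: "u \<noteq> w" "w \<noteq> z" "u \<noteq> z"
  shows "\<bar>x z w - x u z\<bar> \<le> x u w"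
proof -
  have sym: "x a b = x b a" if "a \<in> V" "b \<in> V" "a \<noteq> b" for a b
    using x that unfolding frac_clustering_def by blast
  have tri: "x a c \<le> x a b + x b c"
    if "a \<in> V" "b \<in> V" "c \<in> V" "a \<noteq> b" "b \<noteq> c" "a \<noteq> c" for a b c
    using x that unfolding frac_clustering_def by blast
  show ?thesis
    using tri[of u w z] tri[of z u w] sym[of w z] sym[of z u] V distinct by auto
qed

lemma cluster_cost_lower_bound:
  fixes a c :: "'a \<Rightarrow> real" and \<alpha> d :: real
  assumes "finite W" "P \<subseteq> W"
    and a_le: "\<And>w. w \<in> W \<Longrightarrow> a w \<le> \<alpha>"
    and close: "\<And>w. w \<in> W \<Longrightarrow> \<bar>c w - d\<bar> \<le> a w"
    and c_le: "\<And>w. w \<in> W \<Longrightarrow> c w \<le> 1"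
    and "\<alpha> < d" "\<alpha> \<le> 1/2"
    and sum_a: "sum a W \<le> \<alpha> * card W / 2"
  shows "card P * \<alpha> / 2 \<le> (\<Sum>w\<in>P. c w) + (\<Sum>w\<in>W - P. 1 - c w)"
proof (cases "d \<le> 1 - \<alpha>/2")
  case True
  have "(\<Sum>w\<in>P. d - a w) \<le> (\<Sum>w\<in>P. c w)" "(\<Sum>w\<in>W - P. 1 - d - a w) \<le> (\<Sum>w\<in>W - P. 1 - c w)"
    using close \<open>P \<subseteq> W\<close> by (auto intro!: sum_mono simp: abs_le_iff dest!: close)
  moreover have "sum a W = sum a P + sum a (W - P)" "card W = card P + card (W - P)"
    using \<open>finite W\<close> \<open>P \<subseteq> W\<close> by (auto simp: sum.subset_diff card_Diff_subset card_mono finite_subset)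
  moreover have "card P * (\<alpha>/2) \<le> card P * (d - \<alpha>/2)" "0 \<le> card (W - P) * (1 - d - \<alpha>/2)"
    using \<open>\<alpha> < d\<close> True by (intro mult_left_mono mult_nonneg_nonneg; simp)+
  ultimately show ?thesis
    using sum_a by (simp add: sum_subtractf sum.distrib algebra_simps)
next
  case False
  have "(\<Sum>w\<in>P. \<alpha>/2) \<le> (\<Sum>w\<in>P. c w)"
    using close a_le \<open>P \<subseteq> W\<close> False \<open>\<alpha> \<le> 1/2\<close>
    by (intro sum_mono) (fastforce simp: abs_le_iff)
  moreover have "0 \<le> (\<Sum>w\<in>W - P. 1 - c w)"
    using c_le by (auto intro: sum_nonneg)
  ultimately show ?thesis by simp
qed

theorem lemma6:
  fixes V1 V2 :: "'a set" and lab :: "'a \<Rightarrow> 'a \<Rightarrow> bool"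
    and x :: "'a \<Rightarrow> 'a \<Rightarrow> real" and \<alpha> \<gamma> :: real
    and S :: "'a set" and u z :: 'a
  assumes G: "labeled_cbg V1 V2 lab"
    and params: "0 < \<gamma>" "\<gamma> < \<alpha>" "\<alpha> < 1/2"
    and x: "frac_clustering (V1 \<union> V2) x"
    and reach: "alg_reach V1 V2 x \<alpha> \<gamma> S"
    and nonempty: "V1 \<inter> S \<noteq> {}"
    and piv: "is_pivot V1 V2 x \<gamma> S u"
    and clus: "(\<Sum>w\<in>V2 \<inter> Tset x \<alpha> S u. x u w) < \<alpha> * real (card (V2 \<inter> Tset x \<alpha> S u)) / 2"
    and z: "z \<in> (V1 \<inter> S) - ({u} \<union> Tset x \<alpha> S u)"
  shows "real (card (Nplus V1 V2 lab z \<inter> ({u} \<union> Tset x \<alpha> S u)))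
     \<le> max (1 / (1 - 2 * \<alpha>)) (2 / \<alpha>) *
        ((\<Sum>w\<in>Nplus V1 V2 lab z \<inter> ({u} \<union> Tset x \<alpha> S u). x z w)
         + (\<Sum>w\<in>Nminus V1 V2 lab z \<inter> ({u} \<union> Tset x \<alpha> S u). 1 - x z w))"
proof -
  define W where "W = V2 \<inter> Tset x \<alpha> S u"
  define P where "P = Nplus V1 V2 lab z \<inter> ({u} \<union> Tset x \<alpha> S u)"
  define cost where "cost = (\<Sum>w\<in>P. x z w) + (\<Sum>w\<in>W - P. 1 - x z w)"
  have disj: "V1 \<inter> V2 = {}" and "finite W"
    using G unfolding labeled_cbg_def W_def by auto
  have u: "u \<in> V1" "u \<in> S" using piv unfolding is_pivot_def by auto
  have zV: "z \<in> V1" "z \<in> S" "z \<noteq> u" "\<alpha> < x u z" using z by (auto simp: Tset_def)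
  have "P \<subseteq> W" and minus: "Nminus V1 V2 lab z \<inter> ({u} \<union> Tset x \<alpha> S u) = W - P"
    using disj u zV unfolding P_def W_def Nplus_def Nminus_def is_edge_def by auto
  have V: "S \<subseteq> V1 \<union> V2" using alg_reach_subset[OF reach] .
  have bound: "card P * \<alpha> / 2 \<le> cost"
    unfolding cost_def
  proof (rule cluster_cost_lower_bound[OF \<open>finite W\<close> \<open>P \<subseteq> W\<close>, where d = "x u z"])
    fix w assume "w \<in> W"
    then have w: "w \<in> V2" "w \<in> S" "w \<noteq> u" "w \<noteq> z" "x u w \<le> \<alpha>"
      using zV disj unfolding W_def Tset_def by auto
    then show "x u w \<le> \<alpha>" by simp
    show "\<bar>x z w - x u z\<bar> \<le> x u w"
      using w u zV by (intro frac_clustering_dist_diff[OF x]) auto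
    show "x z w \<le> 1"
      using w zV by (intro frac_clustering_range[OF x]) auto
  qed (use zV params clus in \<open>simp_all add: W_def\<close>)
  have "0 \<le> cost"
    using params by (intro order_trans[OF _ bound]) simp
  have "real (card P) \<le> (2 / \<alpha>) * cost"
    using bound params by (simp add: field_simps)
  also have "\<dots> \<le> max (1 / (1 - 2 * \<alpha>)) (2 / \<alpha>) * cost"
    using \<open>0 \<le> cost\<close> by (intro mult_right_mono) simp_all
  finally have "real (card P) \<le> max (1 / (1 - 2 * \<alpha>)) (2 / \<alpha>) * cost" .
  then show ?thesis unfolding P_def cost_def minus .
qed

end
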